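(* Assume $t_m=1$. If $w$ is a trident of $u_\beta$ with rooted tooth $X=1$ and $Y\ne0$ is a non-rooted tooth of $w$, then $t_Y=t_1$.
   Context: $\beta>1$ is a simple Parry number with $d_\beta(1)=t_1\cdots t_{m-1}t_m$, $m\ge2$, nonnegative integer digits, $t_1\ge1$, satisfying the Parry condition ($t_i\cdots t_m0^\omega$ lexicographically strictly smaller than $t_1\cdots t_m0^\omega$ for $2\le i\le m$). $\varphi$ is the substitution on $\mathcal A=\{0,\dots,m-1\}$ with $\varphi(k)=0^{t_{k+1}}(k+1)$ for $0\le k\le m-2$, $\varphi(m-1)=0^{t_m}$, and $u_\beta=\lim_n\varphi^n(0)$ is its fixed point. A factor $w$ is left special if at least two distinct letters $a$ make $aw$ a factor of $u_\beta$. A factor $w$ is a trident if there exist letters $X,Y,Z\in\mathcal A$ such that: $wX$ is a left special factor; $wY$ and $wZ$ are factors that are not left special; and the unique left extensions of $wY$ and $wZ$ are distinct. $X$ is the rooted tooth and $Y,Z$ the non-rooted teeth. *)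

theory Defs
  imports Main
begin

text \<open>The R\'enyi expansion d_beta(1) = t_1 ... t_m is represented by the list
  t = [t_1, ..., t_m]; so t_i = t ! (i - 1) and m = length t.\<close>

definition pad0 :: "nat list \<Rightarrow> nat \<Rightarrow> nat" where
  "pad0 xs k = (if k < length xs then xs ! k else 0)"

definition lex_less :: "(nat \<Rightarrow> nat) \<Rightarrow> (nat \<Rightarrow> nat) \<Rightarrow> bool" where
  "lex_less a b \<longleftrightarrow> (\<exists>k. (\<forall>j<k. a j = b j) \<and> a k < b k)"

definition simple_parry_digits :: "nat list \<Rightarrow> bool" where
  "simple_parry_digits t \<longleftrightarrow> length t \<ge> 2 \<and> t ! 0 \<ge> 1 \<and>
     (\<forall>i. 2 \<le> i \<and> i \<le> length t \<longrightarrow> lex_less (pad0 (drop (i - 1) t)) (pad0 t))"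

definition phi :: "nat list \<Rightarrow> nat \<Rightarrow> nat list" where
  "phi t k = replicate (t ! k) 0 @ (if k + 1 < length t then [k + 1] else [])"

definition phi_word :: "nat list \<Rightarrow> nat list \<Rightarrow> nat list" where
  "phi_word t w = concat (map (phi t) w)"

text \<open>u_beta = lim phi^n(0): its i-th letter is read off phi^n(0) for the least n
  with i < |phi^n(0)| (phi^n(0) is a prefix of phi^(n+1)(0) since t_1 >= 1).\<close>
definition u_beta :: "nat list \<Rightarrow> nat \<Rightarrow> nat" where
  "u_beta t i = (((phi_word t) ^^ (LEAST n. i < length (((phi_word t) ^^ n) [0]))) [0]) ! i"

definition factor :: "nat list \<Rightarrow> nat list \<Rightarrow> bool" where
  "factor t w \<longleftrightarrow> (\<exists>i. w = map (u_beta t) [i..<i + length w])"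

definition left_special :: "nat list \<Rightarrow> nat list \<Rightarrow> bool" where
  "left_special t w \<longleftrightarrow> (\<exists>a b. a \<noteq> b \<and> factor t (a # w) \<and> factor t (b # w))"

definition trident_teeth :: "nat list \<Rightarrow> nat list \<Rightarrow> nat \<Rightarrow> nat \<Rightarrow> nat \<Rightarrow> bool" where
  "trident_teeth t w X Y Z \<longleftrightarrow>
     X < length t \<and> Y < length t \<and> Z < length t \<and>
     left_special t (w @ [X]) \<and>
     factor t (w @ [Y]) \<and> \<not> left_special t (w @ [Y]) \<and>
     factor t (w @ [Z]) \<and> \<not> left_special t (w @ [Z]) \<and>
     (\<exists>a b. a < length t \<and> b < length t \<and> a \<noteq> b \<and>
        factor t (a # w @ [Y]) \<and> factor t (b # w @ [Z]))"

end

theory Submission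
  imports Defs "HOL-Library.Sublist"
begin

text \<open>The letter 1 occurs in u_beta only as the last letter of phi(0) = 0^{t_1} 1, so every
  occurrence of 1 is preceded by 0^{t_1}; since w 1 is left special, w itself must end with
  0^{t_1}. A letter Y >= 2 occurs only as the last letter of phi(Y - 1) = 0^{t_Y} Y, and the image
  of the letter preceding Y - 1 ends with a nonzero letter; so every occurrence of Y is preceded
  by c 0^{t_Y} with c nonzero. As w Y is a factor, this forces t_1 <= t_Y, while the Parry
  condition gives t_Y <= t_1. Here Y <> 1 because w 1 is left special and w Y is not, and t_m = 1
  is only used to make phi non-erasing.\<close>

lemma phi_word_Nil [simp]: "phi_word t [] = []"
  by (simp add: phi_word_def)

lemma phi_word_Cons [simp]: "phi_word t (a # V) = phi t a @ phi_word t V"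
  by (simp add: phi_word_def)

lemma phi_word_append [simp]: "phi_word t (U @ V) = phi_word t U @ phi_word t V"
  by (simp add: phi_word_def)

lemma replicate_snoc_eq_append_Cons:
  assumes "replicate n z @ [x] = xs @ x # ys" "x \<noteq> z"
  shows "xs = replicate n z \<and> ys = []"
  using assms
proof (induction xs arbitrary: n)
  case Nil then show ?case by (cases n) auto
next
  case (Cons y xs) then show ?case by (cases n) auto
qed

lemma suffix_replicate_le:
  assumes "suffix (replicate k z) w"
    and "suffix (c # replicate l z) w \<or> suffix w (c # replicate l z)"
    and "c \<noteq> z"
  shows "k \<le> l"
proof -
  have "\<not> suffix (c # replicate l z) (replicate k z)"
    using assms(3) set_mono_suffix by fastforce
  moreover have "suffix (replicate k z) (c # replicate l z) \<or> suffix (c # replicate l z) (replicate k z)"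
    using assms(2)
  proof
    assume "suffix (c # replicate l z) w"
    with assms(1) show ?thesis by (rule suffix_same_cases)
  next
    assume "suffix w (c # replicate l z)"
    with assms(1) show ?thesis using suffix_order.trans by blast
  qed
  ultimately have "suffix (replicate k z) (c # replicate l z)" by blast
  then have "suffix (replicate k z) (replicate l z)"
    using assms(3) by (cases k) (auto simp: suffix_Cons)
  then show ?thesis using suffix_length_le by fastforce
qed

lemma parry_digit_le_first:
  assumes "simple_parry_digits t" "2 \<le> i" "i \<le> length t"
  shows "t ! (i - 1) \<le> t ! 0"
proof -
  obtain k where k: "\<forall>j<k. pad0 (drop (i - 1) t) j = pad0 t j" "pad0 (drop (i - 1) t) k < pad0 t k"
    using assms unfolding simple_parry_digits_def lex_less_def by blast
  have "pad0 (drop (i - 1) t) 0 \<le> pad0 t 0"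
    using k by (cases k) auto
  then show ?thesis using assms(2,3) by (auto simp: pad0_def split: if_splits)
qed

lemma phi_eq_append_Cons:
  assumes "phi t a = xs @ k # ys" "k \<noteq> 0"
  shows "k = Suc a \<and> Suc a < length t \<and> xs = replicate (t ! a) 0"
proof -
  have "k \<in> set (phi t a)" using assms(1) by simp
  with assms(2) have k: "k = Suc a" "Suc a < length t"
    by (auto simp: phi_def split: if_splits)
  then have "replicate (t ! a) 0 @ [k] = xs @ k # ys" using assms(1) by (simp add: phi_def)
  from replicate_snoc_eq_append_Cons[OF this assms(2)] k show ?thesis by simp
qed

lemma phi_word_eq_append_Cons:
  assumes "phi_word t V = xs @ k # ys" "k \<noteq> 0"
  shows "\<exists>U U'. V = U @ (k - 1) # U' \<and> k < length t \<and>
           xs = phi_word t U @ replicate (t ! (k - 1)) 0"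
  using assms(1)
proof (induction V arbitrary: xs)
  case Nil then show ?case by simp
next
  case (Cons a V)
  then have "phi t a @ phi_word t V = xs @ k # ys" by simp
  then consider
      (inside) ys' where "phi t a = xs @ k # ys'"
    | (later) us where "xs = phi t a @ us" "phi_word t V = us @ k # ys"
  proof -
    obtain us where "phi t a = xs @ us \<and> us @ phi_word t V = k # ys
        \<or> phi t a @ us = xs \<and> phi_word t V = us @ k # ys"
      using \<open>phi t a @ phi_word t V = xs @ k # ys\<close> by (auto simp: append_eq_append_conv2)
    then show ?thesis
      by (metis Cons_eq_append_conv append_Nil append_Nil2 that)
  qed
  then show ?case
  proof cases
    case inside
    then have "k - 1 = a" "k < length t" "xs = replicate (t ! a) 0"
      using phi_eq_append_Cons[OF inside assms(2)] by auto
    then show ?thesis by (intro exI[of _ "[]"] exI[of _ V]) simp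
  next
    case later
    then obtain U U' where "V = U @ (k - 1) # U'" "k < length t"
        "us = phi_word t U @ replicate (t ! (k - 1)) 0"
      using Cons.IH by blast
    with later show ?thesis by (intro exI[of _ "a # U"] exI[of _ U']) auto
  qed
qed

lemma prefix_phi_word: "prefix U V \<Longrightarrow> prefix (phi_word t U) (phi_word t V)"
  by (auto simp: prefix_def)

definition increasing_if_nonzero :: "nat \<Rightarrow> nat \<Rightarrow> bool" where
  "increasing_if_nonzero c j \<longleftrightarrow> (0 < c \<longrightarrow> 0 < j \<longrightarrow> c < j)"

lemma successively_increasing_if_nonzero_phi: "successively increasing_if_nonzero (phi t a)"
proof -
  have "successively increasing_if_nonzero (replicate n 0 @ xs)" if "length xs \<le> 1" for n xs
  proof (induction n)
    case 0 then show ?case using that by (cases xs) auto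
  next
    case (Suc n) then show ?case by (cases n) (auto simp: successively_Cons increasing_if_nonzero_def)
  qed
  then show ?thesis by (simp add: phi_def)
qed

definition phi_pow :: "nat list \<Rightarrow> nat \<Rightarrow> nat list" where
  "phi_pow t n = (phi_word t ^^ n) [0]"

lemma phi_pow_0 [simp]: "phi_pow t 0 = [0]"
  by (simp add: phi_pow_def)

lemma phi_pow_Suc [simp]: "phi_pow t (Suc n) = phi_word t (phi_pow t n)"
  by (simp add: phi_pow_def)

locale beta_substitution =
  fixes t :: "nat list"
  assumes length_ge_2: "2 \<le> length t"
    and first_digit_pos: "0 < t ! 0"
    and last_digit_pos: "0 < last t"
begin

lemma phi_0: "phi t 0 = replicate (t ! 0) 0 @ [1]"
  using length_ge_2 by (simp add: phi_def)

lemma last_letter_digit_pos: "Suc a = length t \<Longrightarrow> 0 < t ! a"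
  using last_digit_pos by (metis diff_Suc_1 last_conv_nth list.size(3) nat.distinct(1))

lemma phi_nonempty: "a < length t \<Longrightarrow> phi t a \<noteq> []"
  using last_letter_digit_pos[of a] by (cases "Suc a < length t") (auto simp: phi_def)

lemma last_phi: "a < length t \<Longrightarrow> last (phi t a) = (if Suc a < length t then Suc a else 0)"
  using last_letter_digit_pos[of a] by (cases "Suc a < length t") (auto simp: phi_def)

lemma hd_phi: "a < length t \<Longrightarrow> hd (phi t a) = (if t ! a = 0 then Suc a else 0)"
  using last_letter_digit_pos[of a] by (cases "Suc a < length t"; cases "t ! a") (auto simp: phi_def)

lemma set_phi_word: "set (phi_word t V) \<subseteq> {..<length t}"
  using length_ge_2 by (auto simp: phi_word_def phi_def)

lemma set_phi_pow: "set (phi_pow t n) \<subseteq> {..<length t}"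
  using length_ge_2 set_phi_word by (cases n) auto

lemma prefix_phi_pow: "n \<le> k \<Longrightarrow> prefix (phi_pow t n) (phi_pow t k)"
proof (rule prefix_order.lift_Suc_mono_le)
  show "prefix (phi_pow t i) (phi_pow t (Suc i))" for i
  proof (induction i)
    case 0 then show ?case using first_digit_pos by (cases "t ! 0") (simp_all add: phi_0)
  next
    case (Suc i) then show ?case by (simp add: prefix_phi_word)
  qed
qed

lemma phi_pow_Cons: "\<exists>V. phi_pow t n = 0 # V"
  using prefix_phi_pow[of 0 n] by (auto simp: prefix_def)

lemma length_phi_word_ge: "set V \<subseteq> {..<length t} \<Longrightarrow> length V \<le> length (phi_word t V)"
proof (induction V)
  case (Cons a V)
  then show ?case using phi_nonempty[of a] by (cases "phi t a") auto
qed simp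

lemma length_phi_pow: "n < length (phi_pow t n)"
proof (induction n)
  case (Suc n)
  obtain V where V: "phi_pow t n = 0 # V" using phi_pow_Cons by blast
  then have "length V \<le> length (phi_word t V)"
    using set_phi_pow[of n] by (intro length_phi_word_ge) auto
  then show ?case using Suc V first_digit_pos by (simp add: phi_0)
qed simp

lemma successively_phi_word:
  assumes "set V \<subseteq> {..<length t}" "successively increasing_if_nonzero V"
  shows "successively increasing_if_nonzero (phi_word t V)"
  using assms
proof (induction V)
  case (Cons a V)
  have IH: "successively increasing_if_nonzero (phi_word t V)"
    using Cons.IH Cons.prems by (auto simp: successively_Cons)
  have "increasing_if_nonzero (last (phi t a)) (hd (phi_word t V))" if "V \<noteq> []"
  proof -
    obtain b V' where V: "V = b # V'" using \<open>V \<noteq> []\<close> by (cases V) auto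
    have "a < length t" "b < length t" "increasing_if_nonzero a b" using Cons.prems V by auto
    then show ?thesis
      using V first_digit_pos phi_nonempty[of b] last_phi[of a] hd_phi[of b]
      by (cases "b = 0") (auto simp: increasing_if_nonzero_def)
  qed
  then show ?case
    using IH successively_increasing_if_nonzero_phi[of t a]
    by (cases "V = []") (auto simp: successively_append_iff)
qed simp

lemma successively_phi_pow: "successively increasing_if_nonzero (phi_pow t n)"
  by (induction n) (simp_all add: successively_phi_word set_phi_pow)

lemma u_beta_eq_nth: "k < length (phi_pow t n) \<Longrightarrow> u_beta t k = phi_pow t n ! k"
proof -
  assume k: "k < length (phi_pow t n)"
  define N where "N = (LEAST n. k < length (phi_pow t n))"
  have "N \<le> n" unfolding N_def using k by (rule Least_le)
  have "k < length (phi_pow t N)" unfolding N_def using k by (rule LeastI)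
  moreover have "u_beta t k = phi_pow t N ! k"
    by (simp add: u_beta_def phi_pow_def N_def)
  ultimately show ?thesis
    using prefix_phi_pow[OF \<open>N \<le> n\<close>] by (auto simp: prefix_def nth_append)
qed

lemma factor_imp_sublist: "factor t v \<Longrightarrow> \<exists>n. sublist v (phi_pow t n)"
proof -
  assume "factor t v"
  then obtain i where v: "v = map (u_beta t) [i..<i + length v]"
    unfolding factor_def by blast
  define W where "W = phi_pow t (i + length v)"
  have len: "i + length v < length W"
    using length_phi_pow unfolding W_def by blast
  have "v = take (length v) (drop i W)"
  proof (rule nth_equalityI)
    fix j assume j: "j < length v"
    then have "v ! j = u_beta t (i + j)" by (subst v) simp
    also have "\<dots> = W ! (i + j)" using j len u_beta_eq_nth unfolding W_def by simp
    finally show "v ! j = take (length v) (drop i W) ! j" using j len by simp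
  qed (use len in simp)
  then have "sublist v W"
    using sublist_order.order_trans[OF sublist_take sublist_drop] by metis
  then show ?thesis unfolding W_def by blast
qed

lemma suffix_before_one:
  assumes "phi_pow t n = xs @ 1 # ys"
  shows "suffix (replicate (t ! 0) 0) xs"
proof (cases n)
  case 0 then show ?thesis using assms by (simp add: Cons_eq_append_conv)
next
  case (Suc n')
  then show ?thesis
    using assms phi_word_eq_append_Cons[of t "phi_pow t n'" xs 1 ys] by (auto simp: suffix_def)
qed

text \<open>The letter preceding the preimage k - 1 of k is 0 or smaller than k - 1, never the letter
  length t - 1 whose image ends in 0; so the block 0^{t_k} before k is preceded by a nonzero letter.\<close>
lemma suffix_before_letter:
  assumes "phi_pow t n = xs @ k # ys" "2 \<le> k"
  shows "\<exists>c. c \<noteq> 0 \<and> suffix (c # replicate (t ! (k - 1)) 0) xs"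
proof (cases n)
  case 0 then show ?thesis using assms by (simp add: Cons_eq_append_conv)
next
  case (Suc n')
  then obtain U U' where U: "phi_pow t n' = U @ (k - 1) # U'" "k < length t"
      "xs = phi_word t U @ replicate (t ! (k - 1)) 0"
    using assms phi_word_eq_append_Cons[of t "phi_pow t n'" xs k ys] by auto
  have "U \<noteq> []"
    using U(1) phi_pow_Cons[of n'] assms(2) by (cases U) auto
  then obtain U0 b where U0: "U = U0 @ [b]" by (metis rev_exhaust)
  have "b < length t" using U(1) U0 set_phi_pow[of n'] by auto
  moreover have "increasing_if_nonzero b (k - 1)"
    using successively_phi_pow[of n'] U(1) U0 by (simp add: successively_append_iff)
  ultimately have b: "Suc b < length t"
    using U(2) assms(2) length_ge_2 by (cases "b = 0") (auto simp: increasing_if_nonzero_def)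
  then obtain p where "phi t b = p @ [Suc b]"
    using last_phi[of b] phi_nonempty[of b] by (metis append_butlast_last_id Suc_lessD)
  then have "xs = (phi_word t U0 @ p) @ Suc b # replicate (t ! (k - 1)) 0"
    using U(3) U0 by simp
  then show ?thesis by (auto simp: suffix_def)
qed

lemma factor_snoc_one:
  assumes "factor t (v @ [1])"
  shows "suffix (replicate (t ! 0) 0) v \<or> suffix v (replicate (t ! 0) 0)"
proof -
  obtain n ps ss where "phi_pow t n = (ps @ v) @ 1 # ss"
    using factor_imp_sublist[OF assms] by (auto simp: sublist_def)
  then have "suffix (replicate (t ! 0) 0) (ps @ v)" by (rule suffix_before_one)
  moreover have "suffix v (ps @ v)" by (simp add: suffix_def)
  ultimately show ?thesis by (rule suffix_same_cases)
qed

lemma factor_snoc_letter: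
  assumes "factor t (v @ [k])" "2 \<le> k"
  shows "\<exists>c. c \<noteq> 0 \<and>
    (suffix (c # replicate (t ! (k - 1)) 0) v \<or> suffix v (c # replicate (t ! (k - 1)) 0))"
proof -
  obtain n ps ss where "phi_pow t n = (ps @ v) @ k # ss"
    using factor_imp_sublist[OF assms(1)] by (auto simp: sublist_def)
  then obtain c where "c \<noteq> 0" "suffix (c # replicate (t ! (k - 1)) 0) (ps @ v)"
    using suffix_before_letter assms(2) by blast
  moreover have "suffix v (ps @ v)" by (simp add: suffix_def)
  ultimately show ?thesis using suffix_same_cases by blast
qed

lemma left_special_snoc_one_imp_suffix:
  assumes "left_special t (w @ [1])"
  shows "suffix (replicate (t ! 0) 0) w"
proof (rule ccontr)
  assume not_suffix: "\<not> suffix (replicate (t ! 0) 0) w"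
  have "c = 0" if "factor t (c # w @ [1])" for c
  proof -
    have "suffix (c # w) (replicate (t ! 0) 0)"
      using factor_snoc_one[of "c # w"] that not_suffix by (auto simp: suffix_Cons)
    then have "c \<in> set (replicate (t ! 0) 0)" by (auto dest: set_mono_suffix)
    then show ?thesis by simp
  qed
  then show False using assms unfolding left_special_def by auto
qed

end

theorem mainTheorem10:
  fixes t :: "nat list" and w :: "nat list" and Y :: nat
  assumes "simple_parry_digits t"
    and "last t = 1"
    and "\<exists>Z. trident_teeth t w 1 Y Z"
    and "Y \<noteq> 0"
  shows "t ! (Y - 1) = t ! 0"
proof -
  interpret beta_substitution t
    using assms(1,2) by unfold_locales (auto simp: simple_parry_digits_def)
  obtain Z where "trident_teeth t w 1 Y Z" using assms(3) by blast
  then have Y: "Y < length t" "factor t (w @ [Y])" "\<not> left_special t (w @ [Y])"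
    and root: "left_special t (w @ [1])"
    unfolding trident_teeth_def by auto
  then have "2 \<le> Y" using assms(4) by (cases "Y = 1") auto
  then have "t ! (Y - 1) \<le> t ! 0"
    using parry_digit_le_first assms(1) Y(1) by simp
  moreover have "t ! 0 \<le> t ! (Y - 1)"
  proof -
    obtain c where "c \<noteq> 0"
      "suffix (c # replicate (t ! (Y - 1)) 0) w \<or> suffix w (c # replicate (t ! (Y - 1)) 0)"
      using factor_snoc_letter[OF Y(2) \<open>2 \<le> Y\<close>] by blast
    then show ?thesis
      using suffix_replicate_le[OF left_special_snoc_one_imp_suffix[OF root]] by blast
  qed
  ultimately show ?thesis by simp
qed

end
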